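(* For every integer $k \geq 1$, \[ \sum_{j=0}^{k} \binom{k}{j}\, \zeta(j-2k) \;=\; \frac{(-1)^k}{2\,(2k+1)\binom{2k}{k}}, \] where $\zeta$ denotes the Riemann zeta function (analytically continued to the negative integers).
   Context: $\zeta(s)$ is the Riemann zeta function; its values at non-positive integers are those of its meromorphic continuation (e.g. $\zeta(0)=-1/2$, $\zeta(-1)=-1/12$, $\zeta(-2m)=0$ for $m\ge 1$). *)

theory Defs
  imports "HOL-Complex_Analysis.Complex_Analysis"
begin

text \<open>The Riemann zeta function, defined (as in the paper) through its analytic
  continuation: for s \<noteq> 1, zeta s is the value at s of the (unique, by the identity
  theorem) function holomorphic on the complex plane minus {1} which agrees with the
  Dirichlet series sum over n \<ge> 1 of n^(-s) on the half-plane Re s > 1.\<close>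

definition riemann_zeta :: "complex \<Rightarrow> complex" where
  "riemann_zeta s =
     (THE z. \<exists>f. f holomorphic_on (- {1}) \<and>
                 (\<forall>w. 1 < Re w \<longrightarrow> f w = (\<Sum>n. (of_nat (Suc n)) powr (- w))) \<and>
                 f s = z)"

end

theory Submission
  imports Defs "HOL-Computational_Algebra.Polynomial"
begin

text \<open>
  Write \<open>\<zeta>(s) = 1 + zeta_tail s\<close> with \<open>zeta_tail s = \<Sum>n\<ge>2. n powr -s\<close>. Expanding
  \<open>(n - 1) powr (1 - s) - n powr (1 - s)\<close> by the binomial series and summing over \<open>n\<close>
  telescopes to the identity \<open>(s - 1) zeta_tail s = 1 + \<Sum>m. q\<^sub>m(s) (s + m) zeta_tail (s + m + 1)\<close>
  for \<open>Re s > 1\<close>, with polynomials \<open>q\<^sub>m\<close>. Its right-hand side only involves values further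
  to the right, so it continues \<open>G(s) = (s - 1)(\<zeta>(s) - 1)\<close> one half-plane at a time to an
  entire function. At \<open>s = -M\<close> only finitely many \<open>q\<^sub>m\<close> are nonzero, and the identity
  becomes the recurrence
  \<open>\<Sum>i\<le>M. (-1)^i (M+1 choose i) \<zeta>(-i) = -1/(M+2)\<close>.

  Let \<open>L\<close> be the linear functional on polynomials sending \<open>x^i\<close> to \<open>\<zeta>(-i)\<close>. The recurrence
  says \<open>L(p(x - 1)) - L(p) = p(0) - \<integral>\<^sub>-\<^sub>1\<^sup>0 p\<close>, and since it determines \<open>L\<close> uniquely it
  also forces \<open>L(p(-x)) = -L(p) - p(0)\<close>. The polynomial \<open>P = x^k (x + 1)^k\<close> satisfies
  \<open>P(x - 1) = P(-x)\<close> and \<open>P(0) = 0\<close>, hence \<open>L(P) = \<integral>\<^sub>-\<^sub>1\<^sup>0 P / 2\<close>, a Beta integral;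
  and \<open>L(P)\<close> is the left-hand side of the theorem.
\<close>

section \<open>Series estimates\<close>

lemma holomorphic_on_suminf_dominated:
  fixes f :: "nat \<Rightarrow> complex \<Rightarrow> complex"
  assumes S: "open S" and hol: "\<And>n. f n holomorphic_on S"
    and dom: "\<And>x. x \<in> S \<Longrightarrow> \<exists>d>0. cball x d \<subseteq> S \<and>
                 (\<exists>M. summable M \<and> (\<forall>\<^sub>F n in sequentially. \<forall>s\<in>cball x d. norm (f n s) \<le> M n))"
  shows "(\<lambda>s. \<Sum>n. f n s) holomorphic_on S"
proof (rule holomorphic_uniform_sequence[OF S])
  show "(\<lambda>s. \<Sum>n<k. f n s) holomorphic_on S" for k
    by (intro holomorphic_on_sum hol)
  show "\<exists>d>0. cball x d \<subseteq> S \<and> uniform_limit (cball x d) (\<lambda>k s. \<Sum>n<k. f n s) (\<lambda>s. \<Sum>n. f n s) sequentially"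
    if x: "x \<in> S" for x
  proof -
    obtain d M where "0 < d" "cball x d \<subseteq> S" "summable M"
      "\<forall>\<^sub>F n in sequentially. \<forall>s\<in>cball x d. norm (f n s) \<le> M n"
      using dom[OF x] by blast
    then show ?thesis using Weierstrass_m_test_ev by blast
  qed
qed

lemma summable_on_Times_dominated:
  fixes g :: "nat \<Rightarrow> nat \<Rightarrow> 'a::banach"
  assumes A: "summable A" "\<And>m. 0 \<le> A m" and B: "summable B" "\<And>n. 0 \<le> B n"
    and dom: "\<And>m n. norm (g m n) \<le> A m * B n"
  shows "(\<lambda>(m, n). g m n) summable_on UNIV \<times> UNIV"
proof -
  have "(\<lambda>(m, n). A m * B n) summable_on UNIV \<times> UNIV"
  proof (rule summable_on_SigmaI[where g = "\<lambda>m. A m * suminf B"])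
    show "((\<lambda>n. (\<lambda>(m, n). A m * B n) (m, n)) has_sum A m * suminf B) UNIV" for m
      using has_sum_cmult_right[OF sums_nonneg_imp_has_sum[OF summable_sums[OF B(1)] B(2)]] by simp
    show "(\<lambda>m. A m * suminf B) summable_on UNIV"
      using A by (intro summable_on_cmult_left) (simp add: summable_on_UNIV_nonneg_real_iff)
  qed (simp add: A(2) B(2))
  then have "(\<lambda>x. norm ((\<lambda>(m, n). g m n) x)) summable_on UNIV \<times> UNIV"
    by (rule Infinite_Sum.abs_summable_on_comparison_test') (auto simp: dom)
  then show ?thesis
    by (rule abs_summable_summable)
qed

lemma sums_swap_dominated:
  fixes g :: "nat \<Rightarrow> nat \<Rightarrow> 'a::banach"
  assumes A: "summable A" "\<And>m. 0 \<le> A m" and B: "summable B" "\<And>n. 0 \<le> B n"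
    and dom: "\<And>m n. norm (g m n) \<le> A m * B n"
  shows "(\<lambda>m. \<Sum>n. g m n) sums (\<Sum>n. \<Sum>m. g m n)"
proof -
  have infsum_eq_suminf: "(\<Sum>\<^sub>\<infinity>n. f n) = (\<Sum>n. f n)" if "summable (\<lambda>n. norm (f n))"
    for f :: "nat \<Rightarrow> 'a"
    by (rule infsumI, rule norm_summable_imp_has_sum[OF that summable_sums[OF summable_norm_cancel[OF that]]])
  have norm_m: "summable (\<lambda>m. norm (g m n))" for n
    by (rule summable_comparison_test[where g = "\<lambda>m. A m * B n"]) (auto intro!: summable_mult2 A dom)
  have norm_n: "summable (\<lambda>n. norm (g m n))" for m
    by (rule summable_comparison_test[where g = "\<lambda>n. A m * B n"]) (auto intro!: summable_mult B dom)
  have "norm (\<Sum>n. g m n) \<le> A m * suminf B" for m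
  proof -
    have "norm (\<Sum>n. g m n) \<le> (\<Sum>n. norm (g m n))"
      by (rule summable_norm[OF norm_n])
    also have "\<dots> \<le> (\<Sum>n. A m * B n)"
      by (intro suminf_le dom norm_n summable_mult B)
    finally show ?thesis by (simp add: suminf_mult B)
  qed
  then have outer_m: "summable (\<lambda>m. norm (\<Sum>n. g m n))"
    by (intro summable_comparison_test[OF _ summable_mult2[OF A(1)]]) auto
  have "norm (\<Sum>m. g m n) \<le> suminf A * B n" for n
  proof -
    have "norm (\<Sum>m. g m n) \<le> (\<Sum>m. norm (g m n))"
      by (rule summable_norm[OF norm_m])
    also have "\<dots> \<le> (\<Sum>m. A m * B n)"
      by (intro suminf_le dom norm_m summable_mult2 A)
    finally show ?thesis by (simp add: suminf_mult2 A)
  qed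
  then have outer_n: "summable (\<lambda>n. norm (\<Sum>m. g m n))"
    by (intro summable_comparison_test[OF _ summable_mult[OF B(1)]]) auto
  have "(\<Sum>\<^sub>\<infinity>m. \<Sum>\<^sub>\<infinity>n. g m n) = (\<Sum>\<^sub>\<infinity>n. \<Sum>\<^sub>\<infinity>m. g m n)"
    using summable_on_Times_dominated[OF A B dom] by (rule infsum_swap_banach)
  then have "(\<Sum>m. \<Sum>n. g m n) = (\<Sum>n. \<Sum>m. g m n)"
    by (simp add: infsum_eq_suminf norm_m norm_n outer_m outer_n)
  then show ?thesis
    using summable_sums[OF summable_norm_cancel[OF outer_m]] by simp
qed

lemma summable_norm_gbinomial:
  fixes a z :: "'a :: {real_normed_field, banach}"
  assumes "norm z < 1"
  shows "summable (\<lambda>n. norm (a gchoose n) * norm z ^ n)"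
proof -
  have "ereal (norm z) < conv_radius (\<lambda>n. a gchoose n)"
    using assms by (simp add: conv_radius_gchoose one_ereal_def)
  then show ?thesis
    using abs_summable_in_conv_radius by (simp add: norm_mult norm_power)
qed

lemma norm_gbinomial_le:
  fixes a :: "'a :: real_normed_field"
  assumes "norm a \<le> r"
  shows "norm (a gchoose n) \<le> pochhammer r n / fact n"
proof -
  have "norm (a gchoose n) = (\<Prod>i<n. norm (a - of_nat i)) / fact n"
    by (simp add: gbinomial_prod_rev norm_divide prod_norm atLeast0LessThan)
  also have "\<dots> \<le> (\<Prod>i<n. r + of_nat i) / fact n"
  proof (intro divide_right_mono prod_mono conjI)
    show "norm (a - of_nat i) \<le> r + of_nat i" for i
      using norm_triangle_ineq4[of a "of_nat i"] assms by simp
  qed auto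
  also have "\<dots> = pochhammer r n / fact n"
    by (simp add: pochhammer_prod atLeast0LessThan)
  finally show ?thesis .
qed

lemma summable_pochhammer_half:
  fixes r :: real
  assumes "0 < r"
  shows "summable (\<lambda>n. pochhammer r (n + k) / fact (n + k) * (1 / 2) ^ (n + k))"
proof -
  have "pochhammer r n / fact n = norm ((- r) gchoose n)" for n
    using assms by (simp add: gbinomial_pochhammer abs_mult pochhammer_nonneg)
  then have "summable (\<lambda>n. pochhammer r n / fact n * (1 / 2) ^ n)"
    using summable_norm_gbinomial[of "1 / 2 :: real" "- r"] by simp
  then show ?thesis
    by (rule iffD2[OF summable_iff_shift[of "\<lambda>n. pochhammer r n / fact n * (1 / 2) ^ n" k]])
qed

lemma norm_of_nat_powr: "norm ((of_nat n :: complex) powr s) = real n powr Re s"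
  by (subst norm_powr_real_powr) auto

lemma summable_of_nat_add2_powr: "r < -1 \<Longrightarrow> summable (\<lambda>n. real (n + 2) powr r)"
  using summable_iff_shift[of "\<lambda>n. real n powr r" 2] summable_real_powr_iff by auto

lemma Re_ge_of_mem_cball: "s \<in> cball x d \<Longrightarrow> Re x - d \<le> Re s"
  using complex_Re_le_cmod[of "x - s"] by (simp add: dist_norm)

section \<open>Alternating binomial sums\<close>

lemma neg_one_power_diff:
  assumes "l \<le> n"
  shows "(-1 :: 'a :: comm_ring_1) ^ (n - l) = (-1) ^ n * (-1) ^ l"
proof -
  have "(-1 :: 'a) ^ n = (-1) ^ (n - l) * (-1) ^ l"
    using assms by (metis le_add_diff_inverse2 power_add)
  then have "(-1 :: 'a) ^ n * (-1) ^ l = (-1) ^ (n - l) * ((-1) ^ l * (-1) ^ l)"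
    by (simp add: mult.assoc)
  also have "(-1 :: 'a) ^ l * (-1) ^ l = 1"
    by (simp add: power_mult_distrib[symmetric])
  finally show ?thesis
    by simp
qed

lemma alternating_binomial_transform_eqD:
  fixes u v :: "nat \<Rightarrow> 'a::field_char_0"
  assumes "\<And>M. (\<Sum>i\<le>M. (-1) ^ i * of_nat (Suc M choose i) * u i) =
                (\<Sum>i\<le>M. (-1) ^ i * of_nat (Suc M choose i) * v i)"
  shows "u n = v n"
proof (induction n rule: less_induct)
  case (less n)
  have "(\<Sum>i<n. (-1) ^ i * of_nat (Suc n choose i) * u i) = (\<Sum>i<n. (-1) ^ i * of_nat (Suc n choose i) * v i)"
    using less.IH by simp
  with assms[of n] have "(-1) ^ n * of_nat (Suc n) * u n = (-1) ^ n * of_nat (Suc n) * v n"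
    by (simp add: lessThan_Suc_atMost[symmetric])
  then show ?case
    by (simp del: of_nat_Suc)
qed

lemma alternating_binomial_sum_Suc:
  fixes f :: "nat \<Rightarrow> 'a :: comm_ring_1"
  shows "(\<Sum>j\<le>Suc k. (-1) ^ j * of_nat (Suc k choose j) * f j)
           = (\<Sum>j\<le>k. (-1) ^ j * of_nat (k choose j) * f j)
             - (\<Sum>j\<le>k. (-1) ^ j * of_nat (k choose j) * f (Suc j))"
proof -
  have "(\<Sum>j\<le>Suc k. (-1) ^ j * of_nat (Suc k choose j) * f j)
      = f 0 - (\<Sum>j\<le>k. (-1) ^ j * (of_nat (k choose j) + of_nat (k choose Suc j)) * f (Suc j))"
    by (subst sum.atMost_Suc_shift) (simp add: sum_negf)
  also have "\<dots> = (f 0 - (\<Sum>j\<le>k. (-1) ^ j * of_nat (k choose Suc j) * f (Suc j)))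
                   - (\<Sum>j\<le>k. (-1) ^ j * of_nat (k choose j) * f (Suc j))"
    by (simp add: algebra_simps sum.distrib)
  also have "f 0 - (\<Sum>j\<le>k. (-1) ^ j * of_nat (k choose Suc j) * f (Suc j))
      = (\<Sum>j\<le>Suc k. (-1) ^ j * of_nat (k choose j) * f j)"
    by (subst sum.atMost_Suc_shift) (simp add: sum_negf)
  also have "\<dots> = (\<Sum>j\<le>k. (-1) ^ j * of_nat (k choose j) * f j)"
    by (simp add: binomial_eq_0)
  finally show ?thesis .
qed

lemma alternating_binomial_partial_fractions:
  fixes x :: "'a :: field_char_0"
  assumes "\<And>j. x + of_nat j \<noteq> 0"
  shows "(\<Sum>j\<le>k. (-1) ^ j * of_nat (k choose j) / (x + of_nat j)) = fact k / pochhammer x (Suc k)"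
  using assms
proof (induction k arbitrary: x)
  case (Suc k)
  have x1: "x + 1 + of_nat j \<noteq> 0" for j
    using Suc.prems[of "Suc j"] by (simp add: add_ac)
  have nz: "pochhammer x (Suc k) \<noteq> 0"
  proof
    assume "pochhammer x (Suc k) = 0"
    then obtain i where "x = - of_nat i"
      by (auto simp: pochhammer_eq_0_iff)
    with Suc.prems[of i] show False
      by simp
  qed
  have x: "x \<noteq> 0" "x + of_nat (Suc k) \<noteq> 0"
    using Suc.prems[of 0] Suc.prems[of "Suc k"] by simp_all
  have "x * pochhammer (x + 1) (Suc k) = (x + of_nat (Suc k)) * pochhammer x (Suc k)"
    using pochhammer_rec[of x "Suc k"] pochhammer_rec'[of x "Suc k"] by simp
  then have shift: "pochhammer (x + 1) (Suc k) = (x + of_nat (Suc k)) * pochhammer x (Suc k) / x"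
    using x(1) by (simp add: eq_divide_eq mult.commute)
  have "(\<Sum>j\<le>Suc k. (-1) ^ j * of_nat (Suc k choose j) / (x + of_nat j))
      = (\<Sum>j\<le>k. (-1) ^ j * of_nat (k choose j) / (x + of_nat j))
        - (\<Sum>j\<le>k. (-1) ^ j * of_nat (k choose j) / (x + 1 + of_nat j))"
    using alternating_binomial_sum_Suc[of k "\<lambda>j. 1 / (x + of_nat j)"] by (simp add: add_ac)
  also have "\<dots> = fact k / pochhammer x (Suc k) - fact k / pochhammer (x + 1) (Suc k)"
    using Suc.IH[OF Suc.prems] Suc.IH[OF x1] by simp
  also have "\<dots> = fact (Suc k) / pochhammer x (Suc (Suc k))"
    unfolding shift using nz x by (simp add: pochhammer_rec'[of x "Suc k"] divide_simps) algebra
  finally show ?case .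
qed simp

lemma fact_div_pochhammer_eq_central_binomial:
  "fact k / pochhammer (of_nat (Suc k)) (Suc k)
     = (1 / ((2 * of_nat k + 1) * of_nat ((2 * k) choose k)) :: 'a :: field_char_0)"
proof -
  have two_k_plus_one: "2 * of_nat k + 1 = (of_nat (Suc (2 * k)) :: 'a)"
    by simp
  have "2 * k + 1 = k + Suc k"
    by simp
  then have "fact (2 * k + 1) = fact k * (pochhammer (of_nat (Suc k)) (Suc k) :: 'a)"
    by (simp only: pochhammer_fact pochhammer_product' of_nat_Suc)
  then have pochhammer_eq: "pochhammer (of_nat (Suc k)) (Suc k) = (fact (2 * k + 1) / fact k :: 'a)"
    by (simp add: eq_divide_eq mult.commute)
  have "fact (2 * k + 1) = (2 * of_nat k + 1) * (fact (2 * k) :: 'a)"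
    unfolding two_k_plus_one by simp
  also have "fact (2 * k) = fact k * fact k * (of_nat ((2 * k) choose k) :: 'a)"
    using arg_cong[OF binomial_fact_lemma[of k "2 * k"], of "of_nat :: nat \<Rightarrow> 'a"] by (simp add: mult_2)
  finally have "(2 * of_nat k + 1) * of_nat ((2 * k) choose k) = (fact (2 * k + 1) / (fact k * fact k) :: 'a)"
    by (simp add: eq_divide_eq mult_ac)
  then show ?thesis
    unfolding pochhammer_eq by (simp add: mult_ac)
qed

section \<open>Umbral evaluation of polynomials\<close>

definition umbral :: "(nat \<Rightarrow> 'a::comm_semiring_1) \<Rightarrow> 'a poly \<Rightarrow> 'a" where
  "umbral w p = (\<Sum>i\<le>degree p. coeff p i * w i)"

lemma umbral_eq_sum: "degree p \<le> n \<Longrightarrow> umbral w p = (\<Sum>i\<le>n. coeff p i * w i)"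
  unfolding umbral_def by (rule sum.mono_neutral_left) (auto simp: coeff_eq_0)

lemma umbral_0 [simp]: "umbral w 0 = 0"
  by (simp add: umbral_def)

lemma umbral_add: "umbral w (p + q) = umbral w p + umbral w q"
proof -
  define n where "n = max (degree p) (degree q)"
  have "degree (p + q) \<le> n" "degree p \<le> n" "degree q \<le> n"
    by (auto simp: n_def intro: degree_add_le)
  then show ?thesis
    by (simp add: umbral_eq_sum[of "p + q"] umbral_eq_sum[of p] umbral_eq_sum[of q] sum.distrib algebra_simps)
qed

lemma umbral_smult: "umbral w (smult c p) = c * umbral w p"
  unfolding umbral_eq_sum[OF degree_smult_le] by (simp add: umbral_def sum_distrib_left mult_ac)

lemma umbral_sum: "umbral w (\<Sum>i\<in>A. f i) = (\<Sum>i\<in>A. umbral w (f i))"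
  by (induction A rule: infinite_finite_induct) (simp_all add: umbral_add)

lemma umbral_monom: "umbral w (monom c n) = c * w n"
proof -
  have "umbral w (monom c n) = (\<Sum>i\<le>n. if i = n then c * w i else 0)"
    unfolding umbral_eq_sum[OF degree_monom_le] by (rule sum.cong) (auto simp: coeff_monom)
  then show ?thesis
    by simp
qed

lemma linear_poly_power: "[:a, 1:] ^ n = (\<Sum>k\<le>n. monom (of_nat (n choose k) * a ^ (n - k)) k)"
proof -
  have "[:a, 1:] ^ n = (monom 1 1 + [:a:]) ^ n"
    by (simp add: monom_altdef)
  also have "\<dots> = (\<Sum>k\<le>n. of_nat (n choose k) * monom 1 1 ^ k * [:a:] ^ (n - k))"
    by (rule binomial_ring)
  also have "\<dots> = (\<Sum>k\<le>n. monom (of_nat (n choose k) * a ^ (n - k)) k)"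
    by (simp add: monom_power poly_const_pow of_nat_poly smult_monom mult_ac)
  finally show ?thesis .
qed

lemma pcompose_power: "(p ^ n) \<circ>\<^sub>p q = (p \<circ>\<^sub>p q) ^ n"
  by (induction n) (simp_all add: pcompose_mult pcompose_1)

(* umbral integral_moment p is the integral of p over [-1, 0]. *)
definition integral_moment :: "nat \<Rightarrow> 'a :: field" where
  "integral_moment i = (-1) ^ i / (of_nat i + 1)"

lemma umbral_integral_moment_one_plus_power:
  "umbral integral_moment ([:1, 1:] ^ n) = 1 / (of_nat n + 1 :: 'a :: field_char_0)"
proof -
  have "umbral integral_moment ([:1, 1:] ^ n) = (\<Sum>j\<le>n. (-1) ^ j * of_nat (n choose j) / (1 + of_nat j) :: 'a)"
    by (simp add: linear_poly_power umbral_sum umbral_monom integral_moment_def add.commute mult.commute)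
  also have "\<dots> = fact n / pochhammer 1 (Suc n)"
    by (rule alternating_binomial_partial_fractions) (metis add.commute of_nat_Suc of_nat_neq_0)
  also have "pochhammer 1 (Suc n) = (of_nat (Suc n) * fact n :: 'a)"
    by (simp add: pochhammer_fact[symmetric])
  also have "fact n / (of_nat (Suc n) * fact n) = (1 / of_nat (Suc n) :: 'a)"
    by (rule nonzero_divide_mult_cancel_right) simp
  finally show ?thesis
    by simp
qed

lemma x_pow_one_plus_x_pow_eq:
  "[:0, 1:] ^ k * [:1, 1:] ^ k = (\<Sum>j\<le>k. monom (of_nat (k choose j) :: 'a :: comm_ring_1) (k + j))"
proof -
  have "[:0, 1:] ^ k = (monom 1 k :: 'a poly)"
    by (simp add: monom_altdef)
  then show ?thesis
    by (simp add: linear_poly_power sum_distrib_left mult_monom)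
qed

lemma pcompose_x_pow_one_plus_x_pow:
  "([:0, 1:] ^ k * [:1, 1:] ^ k) \<circ>\<^sub>p [:-1, 1:] = ([:0, 1:] ^ k * [:1, 1:] ^ k) \<circ>\<^sub>p [:0, -1 :: 'a :: comm_ring_1:]"
proof -
  have "[:-1, 1:] * [:0, 1:] = [:0, -1:] * [:1, -1 :: 'a:]"
    by simp
  then show ?thesis
    by (simp add: pcompose_mult pcompose_power pcompose_pCons power_mult_distrib[symmetric] mult.commute)
qed

lemma umbral_integral_moment_x_pow_one_plus_x_pow:
  "umbral integral_moment ([:0, 1:] ^ k * [:1, 1:] ^ k)
     = ((-1) ^ k / ((2 * of_nat k + 1) * of_nat ((2 * k) choose k)) :: 'a :: field_char_0)"
proof -
  have nz: "of_nat (Suc k) + of_nat j \<noteq> (0 :: 'a)" for j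
    by (metis add_Suc of_nat_add of_nat_neq_0)
  have "umbral integral_moment ([:0, 1:] ^ k * [:1, 1:] ^ k)
      = (-1) ^ k * (\<Sum>j\<le>k. (-1) ^ j * of_nat (k choose j) / (of_nat (Suc k) + of_nat j) :: 'a)"
    unfolding x_pow_one_plus_x_pow_eq umbral_sum umbral_monom sum_distrib_left
    by (rule sum.cong) (simp_all add: integral_moment_def power_add add_ac)
  also have "\<dots> = (-1) ^ k * (fact k / pochhammer (of_nat (Suc k)) (Suc k))"
    by (simp only: alternating_binomial_partial_fractions[OF nz])
  also have "\<dots> = (-1) ^ k * (1 / ((2 * of_nat k + 1) * of_nat ((2 * k) choose k)))"
    by (simp only: fact_div_pochhammer_eq_central_binomial)
  finally show ?thesis
    by simp
qed

context
  fixes w :: "nat \<Rightarrow> 'a :: field_char_0"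
  assumes recurrence: "\<And>M. (\<Sum>i\<le>M. (-1) ^ i * of_nat (Suc M choose i) * w i) = -1 / (of_nat M + 2)"
begin

lemma umbral_shifted_power:
  "umbral w ([:-1, 1:] ^ n) = w n + (if n = 0 then 1 else 0) - integral_moment n"
proof (cases n)
  case 0
  then show ?thesis
    by (simp add: umbral_def integral_moment_def)
next
  case (Suc M)
  have "umbral w ([:-1, 1:] ^ n) = (\<Sum>l\<le>M. of_nat (Suc M choose l) * (-1) ^ (Suc M - l) * w l) + w n"
    unfolding Suc linear_poly_power umbral_sum umbral_monom by simp
  also have "(\<Sum>l\<le>M. of_nat (Suc M choose l) * (-1) ^ (Suc M - l) * w l)
      = (-1) ^ Suc M * (\<Sum>l\<le>M. (-1) ^ l * of_nat (Suc M choose l) * w l)"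
    unfolding sum_distrib_left by (rule sum.cong) (auto simp: neg_one_power_diff)
  also have "\<dots> = (-1) ^ Suc M * (-1 / (of_nat M + 2))"
    by (simp only: recurrence)
  also have "\<dots> + w n = w n + (if n = 0 then 1 else 0) - integral_moment n"
    by (simp add: Suc integral_moment_def field_simps)
  finally show ?thesis .
qed

lemma umbral_shift: "umbral w (p \<circ>\<^sub>p [:-1, 1:]) - umbral w p = poly p 0 - umbral integral_moment p"
proof -
  have shift_var: "[:0, 1:] \<circ>\<^sub>p [:-1, 1:] = ([:-1, 1:] :: 'a poly)"
    by (simp add: pcompose_pCons)
  have expand: "p = (\<Sum>i\<le>degree p. smult (coeff p i) ([:0, 1:] ^ i))"
    by (simp add: monom_altdef[symmetric] poly_as_sum_of_monoms)
  have "p \<circ>\<^sub>p [:-1, 1:] = (\<Sum>i\<le>degree p. smult (coeff p i) ([:-1, 1:] ^ i))"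
    by (subst expand) (simp only: pcompose_sum pcompose_smult pcompose_power shift_var)
  then have "umbral w (p \<circ>\<^sub>p [:-1, 1:]) = (\<Sum>i\<le>degree p. coeff p i * (w i + (if i = 0 then 1 else 0) - integral_moment i))"
    by (simp add: umbral_sum umbral_smult umbral_shifted_power)
  also have "\<dots> = umbral w p + (\<Sum>i\<le>degree p. if i = 0 then coeff p i else 0) - umbral integral_moment p"
    unfolding umbral_def sum.distrib[symmetric] sum_subtractf[symmetric]
    by (rule sum.cong) (simp_all add: algebra_simps)
  also have "(\<Sum>i\<le>degree p. if i = 0 then coeff p i else 0) = coeff p 0"
    by simp
  finally show ?thesis
    by (simp add: poly_0_coeff_0)
qed

lemma umbral_one_plus_power:
  "w n - (\<Sum>j\<le>n. of_nat (n choose j) * w j) = 1 - 1 / (of_nat n + 1)"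
proof -
  have "[:1, 1:] ^ n \<circ>\<^sub>p [:-1, 1:] = (monom 1 n :: 'a poly)"
    by (simp add: pcompose_power pcompose_pCons monom_altdef)
  moreover have "umbral w ([:1, 1:] ^ n) = (\<Sum>j\<le>n. of_nat (n choose j) * w j)"
    by (simp add: linear_poly_power umbral_sum umbral_monom)
  ultimately show ?thesis
    using umbral_shift[of "[:1, 1:] ^ n"]
    by (simp add: umbral_monom umbral_integral_moment_one_plus_power poly_power)
qed

(* For w i = \<zeta>(-i) this says \<zeta>(-2m) = 0 for m \<ge> 1 and \<zeta>(0) = -1/2. *)
lemma neg_one_power_mult_eq: "(-1) ^ i * w i = - w i - (if i = 0 then 1 else 0)"
proof -
  define v where "v i = - ((-1) ^ i * w i) - (if i = 0 then 1 else 0)" for i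
  have transform_eq: "(\<Sum>i\<le>M. (-1) ^ i * of_nat (Suc M choose i) * v i) =
        (\<Sum>i\<le>M. (-1) ^ i * of_nat (Suc M choose i) * w i)" for M
  proof -
    have "(-1) ^ i * of_nat (Suc M choose i) * v i =
          - (of_nat (Suc M choose i) * w i) - (if i = 0 then 1 else 0)" for i
    proof -
      have "(-1 :: 'a) ^ i * (-1) ^ i = 1"
        by (simp add: power_mult_distrib[symmetric])
      then show ?thesis
        by (auto simp: v_def algebra_simps)
    qed
    then have "(\<Sum>i\<le>M. (-1) ^ i * of_nat (Suc M choose i) * v i) =
               - (\<Sum>i\<le>M. of_nat (Suc M choose i) * w i) - 1"
      by (simp add: sum_subtractf sum_negf)
    also have "(\<Sum>i\<le>M. of_nat (Suc M choose i) * w i) = - 1 + 1 / (of_nat M + 2)"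
      using umbral_one_plus_power[of "Suc M"] by (simp add: algebra_simps)
    finally show ?thesis
      by (simp add: recurrence)
  qed
  have "(-1) ^ i * w i = - v i - (if i = 0 then 1 else 0)"
    by (simp add: v_def)
  also have "v i = w i"
    by (rule alternating_binomial_transform_eqD[OF transform_eq])
  finally show ?thesis .
qed

lemma umbral_reflect: "umbral w (p \<circ>\<^sub>p [:0, -1:]) = - umbral w p - poly p 0"
proof -
  have "degree (p \<circ>\<^sub>p [:0, -1:]) \<le> degree p"
    using degree_pcompose_le[of p "[:0, -1:]"] by simp
  from umbral_eq_sum[OF this]
  have "umbral w (p \<circ>\<^sub>p [:0, -1:]) = (\<Sum>i\<le>degree p. coeff p i * ((-1) ^ i * w i))"
    by (simp add: coeff_pcompose_linear mult_ac)
  also have "\<dots> = (\<Sum>i\<le>degree p. - (coeff p i * w i) - (if i = 0 then coeff p i else 0))"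
    by (intro sum.cong refl) (simp only: neg_one_power_mult_eq, simp add: algebra_simps)
  also have "\<dots> = - umbral w p - poly p 0"
    by (simp add: umbral_def sum_subtractf sum_negf poly_0_coeff_0)
  finally show ?thesis .
qed

lemma umbral_eq_half_integral:
  assumes "p \<circ>\<^sub>p [:-1, 1:] = p \<circ>\<^sub>p [:0, -1:]"
  shows "umbral w p = umbral integral_moment p / 2 - poly p 0"
  using umbral_shift[of p] umbral_reflect[of p] assms by (simp add: field_simps)

end

section \<open>Analytic continuation of the zeta function\<close>

definition zeta_tail :: "complex \<Rightarrow> complex" where
  "zeta_tail s = (\<Sum>n. of_nat (n + 2) powr (- s))"

lemma summable_norm_zeta_tail:
  "1 < Re s \<Longrightarrow> summable (\<lambda>n. norm ((of_nat (n + 2) :: complex) powr (- s)))"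
  unfolding norm_of_nat_powr by (rule summable_of_nat_add2_powr) simp

lemma sums_zeta_tail: "1 < Re s \<Longrightarrow> (\<lambda>n. of_nat (n + 2) powr (- s)) sums zeta_tail s"
  unfolding zeta_tail_def by (rule summable_sums, rule summable_norm_cancel, rule summable_norm_zeta_tail)

lemma zeta_tail_bound:
  obtains C where "0 \<le> C" "\<And>t. 2 \<le> Re t \<Longrightarrow> norm (zeta_tail t) \<le> C * 2 powr (- Re t)"
proof -
  define B where "B n = 4 * real (n + 2) powr (-2)" for n
  have B: "summable B"
    unfolding B_def by (intro summable_mult summable_of_nat_add2_powr) simp
  have "norm (zeta_tail t) \<le> suminf B * 2 powr (- Re t)" if t: "2 \<le> Re t" for t
  proof -
    have "norm (zeta_tail t) \<le> (\<Sum>n. norm ((of_nat (n + 2) :: complex) powr (- t)))"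
      unfolding zeta_tail_def using t by (intro summable_norm summable_norm_zeta_tail) auto
    also have "\<dots> \<le> (\<Sum>n. 2 powr (- Re t) * B n)"
    proof (rule suminf_le)
      fix n
      have "real (n + 2) powr (- Re t) = real (n + 2) powr (-2) * real (n + 2) powr (2 - Re t)"
        by (simp add: powr_add[symmetric])
      also have "\<dots> \<le> real (n + 2) powr (-2) * 2 powr (2 - Re t)"
        using t by (intro mult_left_mono powr_mono2') auto
      also have "\<dots> = 2 powr (- Re t) * B n"
        by (simp add: B_def powr_diff powr_minus divide_inverse mult_ac)
      finally show "norm ((of_nat (n + 2) :: complex) powr (- t)) \<le> 2 powr (- Re t) * B n"
        unfolding norm_of_nat_powr by simp
    next
      show "summable (\<lambda>n. norm ((of_nat (n + 2) :: complex) powr (- t)))"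
        using t by (intro summable_norm_zeta_tail) simp
      show "summable (\<lambda>n. 2 powr (- Re t) * B n)"
        using B by (rule summable_mult)
    qed
    also have "\<dots> = suminf B * 2 powr (- Re t)"
      using suminf_mult2[OF B, of "2 powr (- Re t)"] by (simp add: mult.commute)
    finally show ?thesis .
  qed
  moreover have "0 \<le> suminf B"
    using B by (intro suminf_nonneg) (simp_all add: B_def)
  ultimately show ?thesis using that by blast
qed

lemma holomorphic_zeta_tail: "zeta_tail holomorphic_on {s. 1 < Re s}"
  unfolding zeta_tail_def[abs_def]
proof (rule holomorphic_on_suminf_dominated)
  show "open {s. 1 < Re s}" by (rule open_halfspace_Re_gt)
  show "(\<lambda>s. of_nat (n + 2) powr (- s)) holomorphic_on {s. 1 < Re s}" for n
    by (intro holomorphic_intros)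
  fix x assume "x \<in> {s. 1 < Re s}"
  define d where "d = (Re x - 1) / 2"
  have d: "0 < d" "Re x - d = 1 + d"
    using \<open>x \<in> _\<close> by (auto simp: d_def field_simps)
  have Re_ge: "1 + d \<le> Re s" if "s \<in> cball x d" for s
    using Re_ge_of_mem_cball[OF that] d by linarith
  have "cball x d \<subseteq> {s. 1 < Re s}"
    using Re_ge d by force
  moreover have "summable (\<lambda>n. real (n + 2) powr (- (1 + d)))"
    using d by (intro summable_of_nat_add2_powr) simp
  moreover have "norm ((of_nat (n + 2) :: complex) powr (- s)) \<le> real (n + 2) powr (- (1 + d))"
    if "s \<in> cball x d" for n s
    unfolding norm_of_nat_powr using Re_ge[OF that] by (simp add: powr_mono)
  ultimately show "\<exists>d>0. cball x d \<subseteq> {s. 1 < Re s} \<and> (\<exists>M. summable M \<and>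
      (\<forall>\<^sub>F n in sequentially. \<forall>s\<in>cball x d. norm (of_nat (n + 2) powr (- s)) \<le> M n))"
    using d by (intro exI[of _ d] conjI exI always_eventually) auto
qed

lemma sums_gbinomial_shift:
  fixes a :: complex
  shows "(\<lambda>m. (a gchoose Suc m) * (-1) ^ Suc m * of_nat (n + 2) powr (a - of_nat (Suc m)))
           sums (of_nat (n + 1) powr a - of_nat (n + 2) powr a)"
proof -
  have "(\<lambda>m. (a gchoose m) * of_real (real (n + 2)) powr (a - of_nat m) * of_real (-1) ^ m)
          sums of_real (real (n + 2) + -1) powr a"
    by (rule gen_binomial_complex'') simp
  then have "(\<lambda>m. (a gchoose m) * (-1) ^ m * of_nat (n + 2) powr (a - of_nat m))
               sums of_nat (n + 1) powr a"
    by (simp add: mult_ac)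
  then show ?thesis
    by (subst sums_Suc_iff) simp
qed

lemma sums_telescope_powr:
  assumes "Re a < 0"
  shows "(\<lambda>n. of_nat (n + 1) powr a - of_nat (n + 2) powr a) sums (1 :: complex)"
proof -
  have "filterlim (\<lambda>n. real (Suc n)) at_top sequentially"
    using filterlim_real_sequentially filterlim_sequentially_Suc[of real at_top] by simp
  then have "(\<lambda>n. real (Suc n) powr Re a) \<longlonglongrightarrow> 0"
    using assms by (intro tendsto_neg_powr) auto
  then have "(\<lambda>n. norm ((of_nat (Suc n) :: complex) powr a)) \<longlonglongrightarrow> 0"
    unfolding norm_of_nat_powr by simp
  then have "(\<lambda>n. (of_nat (Suc n) :: complex) powr a) \<longlonglongrightarrow> 0"
    by (rule tendsto_norm_zero_cancel)
  from telescope_sums'[OF this] show ?thesis by simp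
qed

lemma norm_gbinomial_shift_le:
  fixes a :: complex
  shows "norm ((a gchoose Suc m) * (-1) ^ Suc m * of_nat (n + 2) powr (a - of_nat (Suc m)))
           \<le> norm (a gchoose Suc m) * (1 / 2) ^ m * real (n + 2) powr (Re a - 1)"
proof -
  have "real (n + 2) powr (- real m) \<le> 2 powr (- real m)"
    by (intro powr_mono2') auto
  also have "\<dots> = (1 / 2) ^ m"
    by (simp add: powr_minus powr_realpow power_one_over inverse_eq_divide)
  finally have decay: "real (n + 2) powr (- real m) \<le> (1 / 2) ^ m" .
  have "norm ((a gchoose Suc m) * (-1) ^ Suc m * of_nat (n + 2) powr (a - of_nat (Suc m)))
          = norm (a gchoose Suc m) * (real (n + 2) powr (Re a - 1) * real (n + 2) powr (- real m))"
    unfolding norm_mult norm_power norm_of_nat_powr by (simp add: powr_add[symmetric] diff_diff_eq)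
  also have "\<dots> \<le> norm (a gchoose Suc m) * (real (n + 2) powr (Re a - 1) * (1 / 2) ^ m)"
    using decay by (intro mult_left_mono) auto
  finally show ?thesis
    by (simp add: mult_ac)
qed

lemma sums_gbinomial_zeta_tail:
  assumes s: "1 < Re s"
  shows "(\<lambda>m. ((1 - s) gchoose Suc m) * (-1) ^ Suc m * zeta_tail (s + of_nat m)) sums 1"
proof -
  define a where "a = 1 - s"
  define g where "g m n = (a gchoose Suc m) * (-1) ^ Suc m * of_nat (n + 2) powr (a - of_nat (Suc m))"
    for m n
  define A where "A m = norm (a gchoose Suc m) * (1 / 2) ^ m" for m
  define B where "B n = real (n + 2) powr (- Re s)" for n
  have "summable (\<lambda>n. norm (a gchoose n) * (1 / 2) ^ n)"
    using summable_norm_gbinomial[of "1 / 2 :: complex" a] by simp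
  then have "summable (\<lambda>m. norm (a gchoose Suc m) * (1 / 2) ^ Suc m)"
    by (subst summable_Suc_iff)
  then have sA: "summable A"
    unfolding A_def using summable_mult[of _ 2] by simp
  have sB: "summable B"
    unfolding B_def using s by (intro summable_of_nat_add2_powr) simp
  have dom: "norm (g m n) \<le> A m * B n" for m n
    using norm_gbinomial_shift_le[of a m n] by (simp add: g_def A_def B_def a_def)
  have "(\<lambda>m. \<Sum>n. g m n) sums (\<Sum>n. \<Sum>m. g m n)"
    by (rule sums_swap_dominated[OF sA _ sB _ dom]) (simp_all add: A_def B_def)
  moreover have "(\<Sum>m. g m n) = of_nat (n + 1) powr a - of_nat (n + 2) powr a" for n
    using sums_gbinomial_shift[of a n] by (simp add: sums_iff g_def)
  moreover have "(\<Sum>n. g m n) = (a gchoose Suc m) * (-1) ^ Suc m * zeta_tail (s + of_nat m)" for m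
  proof -
    have "(\<lambda>n. (a gchoose Suc m) * (-1) ^ Suc m * of_nat (n + 2) powr (- (s + of_nat m)))
            sums ((a gchoose Suc m) * (-1) ^ Suc m * zeta_tail (s + of_nat m))"
      using s by (intro sums_mult sums_zeta_tail) simp
    then show ?thesis
      by (simp add: sums_iff g_def a_def algebra_simps)
  qed
  moreover have "(\<Sum>n. of_nat (n + 1) powr a - of_nat (n + 2) powr a) = (1 :: complex)"
    using sums_telescope_powr[of a] s by (simp add: sums_iff a_def)
  ultimately show ?thesis
    by (simp add: a_def)
qed

(* This is (1 - s gchoose m + 2) with the factor -(s + m) removed: that factor is kept with
   zeta_tail (s + m + 1), where it cancels the pole at s + m = 0. *)
definition zeta_coeff :: "nat \<Rightarrow> complex \<Rightarrow> complex" where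
  "zeta_coeff m s = (-1) ^ m * ((1 - s) gchoose Suc m) / of_nat (m + 2)"

lemma holomorphic_zeta_coeff: "zeta_coeff m holomorphic_on A"
  unfolding zeta_coeff_def[abs_def] gbinomial_prod_rev by (intro holomorphic_intros) simp_all

lemma zeta_coeff_mult: "zeta_coeff m s * (s + of_nat m) = (-1) ^ Suc m * ((1 - s) gchoose (m + 2))"
proof -
  have rec: "of_nat (m + 2) * ((1 - s) gchoose (m + 2)) = - ((s + of_nat m) * ((1 - s) gchoose Suc m))"
    using gbinomial_mult_1[of "1 - s" "Suc m"] by (simp add: algebra_simps add_eq_0_iff)
  have "zeta_coeff m s * (s + of_nat m) = (-1) ^ m * ((s + of_nat m) * ((1 - s) gchoose Suc m)) / of_nat (m + 2)"
    by (simp add: zeta_coeff_def mult_ac)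
  also have "\<dots> = (-1) ^ Suc m * (of_nat (m + 2) * ((1 - s) gchoose (m + 2))) / of_nat (m + 2)"
    unfolding rec by simp
  also have "\<dots> = (-1) ^ Suc m * ((1 - s) gchoose (m + 2))"
    by (metis nonzero_mult_div_cancel_left of_nat_eq_0_iff add_is_0 zero_neq_numeral mult.left_commute)
  finally show ?thesis .
qed

lemma zeta_tail_functional_eq:
  assumes s: "1 < Re s"
  shows "(s - 1) * zeta_tail s =
           1 + (\<Sum>m. zeta_coeff m s * ((s + of_nat m) * zeta_tail (s + of_nat m + 1)))"
proof -
  define c where "c m = ((1 - s) gchoose Suc m) * (-1) ^ Suc m" for m
  have "(\<lambda>m. c m * zeta_tail (s + of_nat m)) sums 1"
    using sums_gbinomial_zeta_tail[OF s] by (simp add: c_def)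
  then have "(\<lambda>m. c (Suc m) * zeta_tail (s + of_nat (Suc m))) sums (1 - c 0 * zeta_tail s)"
    by (subst sums_Suc_iff) simp
  moreover have "c (Suc m) * zeta_tail (s + of_nat (Suc m)) =
      - (zeta_coeff m s * ((s + of_nat m) * zeta_tail (s + of_nat m + 1)))" for m
    unfolding mult.assoc[symmetric] zeta_coeff_mult by (simp add: c_def numeral_2_eq_2 add_ac)
  moreover have "c 0 = s - 1"
    by (simp add: c_def)
  ultimately have "(\<lambda>m. - (zeta_coeff m s * ((s + of_nat m) * zeta_tail (s + of_nat m + 1))))
                     sums (1 - (s - 1) * zeta_tail s)"
    by simp
  from sums_minus[OF this]
  have "(\<lambda>m. zeta_coeff m s * ((s + of_nat m) * zeta_tail (s + of_nat m + 1)))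
          sums ((s - 1) * zeta_tail s - 1)"
    by simp
  then show ?thesis
    by (simp add: sums_iff)
qed

(* zeta_cont N continues (s - 1) * zeta_tail s to Re s > 1 - N: the recursive call is only
   evaluated at points s + m + 1, one unit further to the right. *)
fun zeta_cont :: "nat \<Rightarrow> complex \<Rightarrow> complex" where
  "zeta_cont 0 s = (s - 1) * zeta_tail s"
| "zeta_cont (Suc N) s = 1 + (\<Sum>m. zeta_coeff m s * zeta_cont N (s + of_nat m + 1))"

lemma zeta_cont_eq_tail: "1 < Re s \<Longrightarrow> zeta_cont N s = (s - 1) * zeta_tail s"
proof (induction N arbitrary: s)
  case (Suc N)
  then have "zeta_cont N (s + of_nat m + 1) = (s + of_nat m) * zeta_tail (s + of_nat m + 1)" for m
    by simp
  then show ?case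
    using zeta_tail_functional_eq[OF Suc.prems] by simp
qed simp

lemma norm_zeta_coeff_mult_le:
  assumes "norm s + 1 \<le> r"
  shows "norm (zeta_coeff m s * (s + of_nat m)) \<le> pochhammer r (m + 2) / fact (m + 2)"
proof -
  have "norm (1 - s) \<le> r"
    using norm_triangle_ineq4[of 1 s] assms by simp
  then show ?thesis
    using norm_gbinomial_le[of "1 - s" r "m + 2"] by (simp add: zeta_coeff_mult norm_mult norm_power)
qed

lemma norm_zeta_cont_term_le:
  assumes C: "0 \<le> C" "\<And>t. 2 \<le> Re t \<Longrightarrow> norm (zeta_tail t) \<le> C * 2 powr (- Re t)"
    and m: "N < m" and s: "- real N \<le> Re s" "norm s + 1 \<le> r"
  shows "norm (zeta_coeff m s * zeta_cont N (s + of_nat m + 1))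
           \<le> C * 2 powr (real N + 1) * (pochhammer r (m + 2) / fact (m + 2) * (1 / 2) ^ (m + 2))"
proof -
  have r: "0 < r"
    using s(2) norm_ge_zero[of s] by linarith
  have Re_t: "2 \<le> Re (s + of_nat m + 1)" "real m + 1 - real N \<le> Re (s + of_nat m + 1)"
    using s(1) m by auto
  have "norm (zeta_coeff m s * zeta_cont N (s + of_nat m + 1))
          = norm (zeta_coeff m s * (s + of_nat m)) * norm (zeta_tail (s + of_nat m + 1))"
    using Re_t by (simp add: zeta_cont_eq_tail norm_mult)
  also have "\<dots> \<le> pochhammer r (m + 2) / fact (m + 2) * (C * 2 powr (- Re (s + of_nat m + 1)))"
    using r by (intro mult_mono norm_zeta_coeff_mult_le s C(2)[OF Re_t(1)]
        divide_nonneg_pos pochhammer_nonneg norm_ge_zero) auto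
  also have "\<dots> \<le> pochhammer r (m + 2) / fact (m + 2) * (C * (2 powr (real N + 1) * (1 / 2) ^ (m + 2)))"
  proof -
    have "2 powr (- Re (s + of_nat m + 1)) \<le> 2 powr (real N + 1 - real (m + 2))"
      using Re_t(2) by (intro powr_mono) auto
    also have "\<dots> = 2 powr (real N + 1) / 2 ^ (m + 2)"
      by (simp only: powr_diff powr_realpow[of 2 "m + 2"] zero_less_numeral)
    also have "\<dots> = 2 powr (real N + 1) * (1 / 2) ^ (m + 2)"
      by (simp add: power_one_over)
    finally show ?thesis
      using r C(1) by (intro mult_left_mono divide_nonneg_pos pochhammer_nonneg) auto
  qed
  finally show ?thesis
    by (simp add: mult_ac)
qed

lemma holomorphic_zeta_cont: "zeta_cont N holomorphic_on {s. 1 - real N < Re s}"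
proof (induction N)
  case 0
  show ?case
    by (auto intro!: holomorphic_intros holomorphic_zeta_tail)
next
  case (Suc N)
  define H where "H = {s. 1 - real (Suc N) < Re s}"
  obtain C where C: "0 \<le> C" "\<And>t. 2 \<le> Re t \<Longrightarrow> norm (zeta_tail t) \<le> C * 2 powr (- Re t)"
    using zeta_tail_bound by blast
  have "(\<lambda>s. \<Sum>m. zeta_coeff m s * zeta_cont N (s + of_nat m + 1)) holomorphic_on H"
  proof (rule holomorphic_on_suminf_dominated)
    show "open H"
      unfolding H_def by (rule open_halfspace_Re_gt)
    have "(zeta_cont N \<circ> (\<lambda>s. s + of_nat m + 1)) holomorphic_on H" for m
      using Suc.IH by (intro holomorphic_on_compose holomorphic_intros)
        (auto elim!: holomorphic_on_subset simp: H_def)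
    then show "(\<lambda>s. zeta_coeff m s * zeta_cont N (s + of_nat m + 1)) holomorphic_on H" for m
      unfolding o_def by (intro holomorphic_intros holomorphic_zeta_coeff)
    fix x assume "x \<in> H"
    define d where "d = (Re x + real N) / 2"
    have d: "0 < d" "Re x - d = d - real N"
      using \<open>x \<in> H\<close> by (auto simp: d_def H_def field_simps)
    define r where "r = norm x + d + 1"
    have s_bounds: "d - real N \<le> Re s" "norm s + 1 \<le> r" if "s \<in> cball x d" for s
      using Re_ge_of_mem_cball[OF that] d norm_triangle_ineq2[of s x] that
      by (auto simp: r_def dist_norm norm_minus_commute)
    have "cball x d \<subseteq> H"
      using s_bounds(1) d by (force simp: H_def)
    moreover have "summable (\<lambda>m. C * 2 powr (real N + 1) * (pochhammer r (m + 2) / fact (m + 2) * (1 / 2) ^ (m + 2)))"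
      using d by (intro summable_mult summable_pochhammer_half) (simp add: r_def add_nonneg_pos)
    moreover have "norm (zeta_coeff m s * zeta_cont N (s + of_nat m + 1))
        \<le> C * 2 powr (real N + 1) * (pochhammer r (m + 2) / fact (m + 2) * (1 / 2) ^ (m + 2))"
      if "N < m" "s \<in> cball x d" for m s
      using s_bounds[OF that(2)] d(1) by (intro norm_zeta_cont_term_le[OF C that(1)]) auto
    ultimately show "\<exists>d>0. cball x d \<subseteq> H \<and> (\<exists>M. summable M \<and> (\<forall>\<^sub>F m in sequentially.
        \<forall>s\<in>cball x d. norm (zeta_coeff m s * zeta_cont N (s + of_nat m + 1)) \<le> M m))"
      using d(1) by (intro exI[of _ d] conjI exI) (auto simp: eventually_sequentially intro!: exI[of _ "Suc N"])
  qed
  then show ?case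
    unfolding H_def by (auto intro!: holomorphic_intros)
qed

lemma zeta_cont_Suc_eq:
  assumes "1 - real N < Re s"
  shows "zeta_cont (Suc N) s = zeta_cont N s"
proof (rule analytic_continuation_open[where f = "zeta_cont (Suc N)" and g = "zeta_cont N"])
  show "open {s. 1 < Re s}" "open {s. 1 - real N < Re s}"
    by (simp_all add: open_halfspace_Re_gt)
  show "{s. 1 < Re s} \<noteq> {}"
    by (auto intro!: exI[of _ 2])
  show "connected {s. 1 - real N < Re s}"
    by (simp add: convex_connected convex_halfspace_Re_gt)
  show "{s. 1 < Re s} \<subseteq> {s. 1 - real N < Re s}"
    by auto
  show "zeta_cont (Suc N) holomorphic_on {s. 1 - real N < Re s}"
    by (rule holomorphic_on_subset[OF holomorphic_zeta_cont]) auto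
  show "zeta_cont N holomorphic_on {s. 1 - real N < Re s}"
    by (rule holomorphic_zeta_cont)
  show "zeta_cont (Suc N) z = zeta_cont N z" if "z \<in> {s. 1 < Re s}" for z
    using that by (simp del: zeta_cont.simps add: zeta_cont_eq_tail)
qed (use assms in simp)

lemma zeta_cont_eq:
  assumes "1 - real N < Re s" "N \<le> M"
  shows "zeta_cont M s = zeta_cont N s"
  using assms(2)
proof (induction M rule: dec_induct)
  case (step M)
  then show ?case
    using assms(1) zeta_cont_Suc_eq[of M s] by simp
qed simp

definition zeta_entire :: "complex \<Rightarrow> complex" where
  "zeta_entire s = zeta_cont (nat \<lceil>1 - Re s\<rceil> + 1) s"

lemma zeta_entire_eq_zeta_cont:
  assumes "1 - real N < Re s"
  shows "zeta_entire s = zeta_cont N s"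
proof -
  define N' where "N' = nat \<lceil>1 - Re s\<rceil> + 1"
  have "1 - real N' < Re s"
    unfolding N'_def by linarith
  then show ?thesis
    using zeta_cont_eq[OF \<open>1 - real N' < Re s\<close>, of "max N N'"] zeta_cont_eq[OF assms, of "max N N'"]
    by (simp add: zeta_entire_def N'_def)
qed

lemma holomorphic_zeta_entire: "zeta_entire holomorphic_on UNIV"
proof -
  have "zeta_entire field_differentiable at s" for s
  proof -
    define N where "N = nat \<lceil>1 - Re s\<rceil> + 1"
    have "zeta_entire holomorphic_on {z. 1 - real N < Re z}"
      using holomorphic_zeta_cont[of N] by (rule holomorphic_transform) (simp add: zeta_entire_eq_zeta_cont)
    moreover have "s \<in> {z. 1 - real N < Re z}"
      unfolding N_def by simp linarith
    ultimately show ?thesis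
      by (rule holomorphic_on_imp_differentiable_at[OF _ open_halfspace_Re_gt])
  qed
  then show ?thesis
    by (simp add: holomorphic_on_def field_differentiable_at_within)
qed

lemma riemann_zeta_eqI:
  assumes f: "f holomorphic_on - {1}" and s: "s \<noteq> 1"
    and dirichlet: "\<And>w. 1 < Re w \<Longrightarrow> f w = (\<Sum>n. of_nat (Suc n) powr (- w))"
  shows "riemann_zeta s = f s"
  unfolding riemann_zeta_def
proof (rule the_equality)
  show "\<exists>g. g holomorphic_on - {1} \<and> (\<forall>w. 1 < Re w \<longrightarrow> g w = (\<Sum>n. of_nat (Suc n) powr (- w))) \<and> g s = f s"
    using f dirichlet by blast
  fix z assume "\<exists>g. g holomorphic_on - {1} \<and> (\<forall>w. 1 < Re w \<longrightarrow> g w = (\<Sum>n. of_nat (Suc n) powr (- w))) \<and> g s = z"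
  then obtain g where g: "g holomorphic_on - {1}" "\<And>w. 1 < Re w \<Longrightarrow> g w = (\<Sum>n. of_nat (Suc n) powr (- w))"
    and "g s = z"
    by blast
  have "g s = f s"
  proof (rule analytic_continuation_open[where f = g and g = f and s = "{w. 1 < Re w}" and s' = "- {1}"])
    show "open {w. 1 < Re w}" by (rule open_halfspace_Re_gt)
    show "connected (- {1 :: complex})" by (rule connected_punctured_universe) simp
    show "{w. 1 < Re w} \<noteq> {}" by (auto intro!: exI[of _ 2])
  qed (use f g s dirichlet in auto)
  then show "z = f s"
    using \<open>g s = z\<close> by simp
qed

lemma riemann_zeta_eq_zeta_entire:
  assumes "s \<noteq> 1"
  shows "riemann_zeta s = 1 + zeta_entire s / (s - 1)"
proof (rule riemann_zeta_eqI[OF _ assms])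
  show "(\<lambda>s. 1 + zeta_entire s / (s - 1)) holomorphic_on - {1}"
    by (intro holomorphic_intros holomorphic_on_subset[OF holomorphic_zeta_entire]) auto
  fix w :: complex assume w: "1 < Re w"
  then have "w \<noteq> 1" by auto
  have "(\<lambda>n. of_nat (Suc (Suc n)) powr (- w)) sums zeta_tail w"
    using sums_zeta_tail[OF w] by (simp add: numeral_2_eq_2)
  then have "(\<lambda>n. of_nat (Suc n) powr (- w)) sums (zeta_tail w + 1)"
    by (subst (asm) sums_Suc_iff) simp
  moreover have "zeta_entire w = (w - 1) * zeta_tail w"
    using w zeta_entire_eq_zeta_cont[of 0 w] zeta_cont_eq_tail by simp
  ultimately show "1 + zeta_entire w / (w - 1) = (\<Sum>n. of_nat (Suc n) powr (- w))"
    using \<open>w \<noteq> 1\<close> by (simp add: sums_iff)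
qed

section \<open>The zeta function at the non-positive integers\<close>

lemma zeta_entire_one: "zeta_entire 1 = 1"
proof -
  have "zeta_entire 1 = zeta_cont 1 1"
    by (rule zeta_entire_eq_zeta_cont) simp
  then show ?thesis
    by (simp add: zeta_coeff_def gbinomial_0_left)
qed

lemma gbinomial_one_minus_neg_of_nat: "(1 - (- of_nat M :: complex)) gchoose k = of_nat (Suc M choose k)"
  unfolding binomial_gbinomial by simp

lemma zeta_coeff_neg_of_nat:
  "zeta_coeff m (- of_nat M) = (-1) ^ m * of_nat (Suc M choose Suc m) / of_nat (m + 2)"
  unfolding zeta_coeff_def gbinomial_one_minus_neg_of_nat ..

lemma zeta_entire_neg_recurrence:
  "zeta_entire (- of_nat M) =
     1 + (\<Sum>m\<le>M. zeta_coeff m (- of_nat M) * zeta_entire (- of_nat M + of_nat m + 1))"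
proof -
  have "zeta_entire (- of_nat M) = zeta_cont (Suc (Suc M)) (- of_nat M)"
    by (rule zeta_entire_eq_zeta_cont) simp
  also have "\<dots> = 1 + (\<Sum>m. zeta_coeff m (- of_nat M) * zeta_cont (Suc M) (- of_nat M + of_nat m + 1))"
    by simp
  also have "(\<Sum>m. zeta_coeff m (- of_nat M) * zeta_cont (Suc M) (- of_nat M + of_nat m + 1))
      = (\<Sum>m\<le>M. zeta_coeff m (- of_nat M) * zeta_cont (Suc M) (- of_nat M + of_nat m + 1))"
    by (rule suminf_finite) (simp_all add: zeta_coeff_neg_of_nat binomial_eq_0 del: binomial_Suc_Suc)
  also have "\<dots> = (\<Sum>m\<le>M. zeta_coeff m (- of_nat M) * zeta_entire (- of_nat M + of_nat m + 1))"
    by (intro sum.cong refl) (simp add: zeta_entire_eq_zeta_cont[of "Suc M"] del: zeta_cont.simps)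
  finally show ?thesis .
qed

lemma zeta_entire_neg_of_nat:
  "zeta_entire (- of_nat i) = - (of_nat i + 1) * (riemann_zeta (- of_nat i) - 1)"
proof -
  have "riemann_zeta (- of_nat i) = 1 + zeta_entire (- of_nat i) / (- of_nat i - 1)"
    by (rule riemann_zeta_eq_zeta_entire) (simp add: complex_eq_iff)
  then have zeta: "riemann_zeta (- of_nat i) - 1 = zeta_entire (- of_nat i) / (- of_nat i - 1)"
    by simp
  have "- of_nat i - 1 \<noteq> (0 :: complex)"
    by (simp add: complex_eq_iff)
  then have "zeta_entire (- of_nat i) = zeta_entire (- of_nat i) / (- of_nat i - 1) * (- of_nat i - 1)"
    by simp
  also have "\<dots> = - (of_nat i + 1) * (riemann_zeta (- of_nat i) - 1)"
    unfolding zeta[symmetric] by (simp add: algebra_simps)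
  finally show ?thesis .
qed

lemma zeta_coeff_mult_zeta_entire_neg:
  assumes "m < M"
  shows "zeta_coeff m (- of_nat M) * zeta_entire (- of_nat M + of_nat m + 1)
           = (-1) ^ M * ((-1) ^ (M - Suc m) * of_nat (Suc M choose (M - Suc m))
               * (riemann_zeta (- of_nat (M - Suc m)) - 1))"
proof -
  define i where "i = M - Suc m"
  have M: "M = i + Suc m"
    using assms by (simp add: i_def)
  have arg: "- of_nat M + of_nat m + 1 = - (of_nat i :: complex)"
    by (simp add: M)
  have factor: "- (of_nat i + 1) = - of_nat M + (of_nat m :: complex)"
    by (simp add: M)
  have "zeta_coeff m (- of_nat M) * zeta_entire (- of_nat M + of_nat m + 1)
          = zeta_coeff m (- of_nat M) * (- of_nat M + of_nat m) * (riemann_zeta (- of_nat i) - 1)"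
    unfolding arg zeta_entire_neg_of_nat factor by (simp only: mult.assoc)
  also have "\<dots> = (-1) ^ Suc m * of_nat (Suc M choose (m + 2)) * (riemann_zeta (- of_nat i) - 1)"
    unfolding zeta_coeff_mult gbinomial_one_minus_neg_of_nat ..
  also have "Suc M choose (m + 2) = Suc M choose i"
    by (subst binomial_symmetric) (simp_all add: M)
  also have "(-1) ^ Suc m = (-1) ^ M * (-1 :: complex) ^ i"
    by (simp add: M power_add)
  finally show ?thesis
    by (simp add: i_def mult_ac)
qed

lemma riemann_zeta_neg_recurrence:
  "(\<Sum>i\<le>M. (-1) ^ i * of_nat (Suc M choose i) * riemann_zeta (- of_nat i)) = -1 / (of_nat M + 2)"
proof -
  define t where "t i = (-1) ^ i * of_nat (Suc M choose i) * (riemann_zeta (- of_nat i) - 1)" for i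
  define \<sigma> :: complex where "\<sigma> = (-1) ^ M"
  have \<sigma>2: "\<sigma> * \<sigma> = 1"
    by (simp add: \<sigma>_def power_mult_distrib[symmetric])
  have lower: "zeta_coeff m (- of_nat M) * zeta_entire (- of_nat M + of_nat m + 1) = \<sigma> * t (M - Suc m)"
    if "m < M" for m
    using zeta_coeff_mult_zeta_entire_neg[OF that] by (simp add: t_def \<sigma>_def)
  have top: "zeta_coeff M (- of_nat M) * zeta_entire (- of_nat M + of_nat M + 1) = \<sigma> / (of_nat M + 2)"
    by (simp add: zeta_coeff_neg_of_nat zeta_entire_one \<sigma>_def)
  have "t M = \<sigma> * (of_nat M + 1) * (riemann_zeta (- of_nat M) - 1)"
    by (simp add: t_def \<sigma>_def)
  then have "- \<sigma> * t M = - (\<sigma> * \<sigma>) * (of_nat M + 1) * (riemann_zeta (- of_nat M) - 1)"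
    by (simp add: mult_ac)
  also have "\<dots> = zeta_entire (- of_nat M)"
    by (simp add: \<sigma>2 zeta_entire_neg_of_nat)
  also have "\<dots> = 1 + ((\<Sum>m<M. \<sigma> * t (M - Suc m)) + \<sigma> / (of_nat M + 2))"
    unfolding zeta_entire_neg_recurrence lessThan_Suc_atMost[symmetric] sum.lessThan_Suc top
    by (intro arg_cong2[where f = "(+)"] refl sum.cong lower) simp
  also have "(\<Sum>m<M. \<sigma> * t (M - Suc m)) = \<sigma> * (\<Sum>i<M. t i)"
    by (simp only: sum_distrib_left[symmetric] sum.nat_diff_reindex)
  finally have rec: "- \<sigma> * t M = 1 + (\<sigma> * (\<Sum>i<M. t i) + \<sigma> / (of_nat M + 2))" .
  have "- t M = \<sigma> * (- \<sigma> * t M)"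
    using \<sigma>2 by (simp add: mult.assoc[symmetric])
  also have "\<dots> = \<sigma> + ((\<Sum>i<M. t i) + 1 / (of_nat M + 2))"
    unfolding rec using \<sigma>2 by (simp add: distrib_left mult.assoc[symmetric])
  finally have "(\<Sum>i\<le>M. t i) = - \<sigma> - 1 / (of_nat M + 2)"
    unfolding lessThan_Suc_atMost[symmetric] sum.lessThan_Suc by algebra
  moreover have "(\<Sum>i\<le>M. (-1) ^ i * of_nat (Suc M choose i)) = \<sigma>"
    using gbinomial_sum_lower_neg[of "of_nat (Suc M) :: complex" M] binomial_gbinomial[of M M]
    by (simp add: \<sigma>_def binomial_gbinomial mult_ac)
  ultimately show ?thesis
    by (simp add: t_def algebra_simps sum_subtractf add_eq_0_iff)
qed

theorem mainTheorem1:
  fixes k :: nat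
  assumes "k \<ge> 1"
  shows "(\<Sum>j = 0..k. of_nat (k choose j) * riemann_zeta (of_int (int j - 2 * int k)))
         = (-1) ^ k / (2 * (2 * of_nat k + 1) * of_nat ((2 * k) choose k))"
proof -
  define w where "w n = riemann_zeta (- of_nat n)" for n
  define P :: "complex poly" where "P = [:0, 1:] ^ k * [:1, 1:] ^ k"
  have "(\<Sum>j = 0..k. of_nat (k choose j) * riemann_zeta (of_int (int j - 2 * int k)))
      = (\<Sum>j = 0..k. of_nat (k choose (k - j)) * riemann_zeta (of_int (int (k - j) - 2 * int k)))"
    by (subst sum.atLeastAtMost_rev) simp
  also have "\<dots> = umbral w P"
    unfolding P_def x_pow_one_plus_x_pow_eq umbral_sum umbral_monom atLeast0AtMost
    by (rule sum.cong) (auto simp: w_def binomial_symmetric[symmetric] of_nat_diff)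
  also have "\<dots> = umbral integral_moment P / 2 - poly P 0"
    using riemann_zeta_neg_recurrence unfolding P_def
    by (intro umbral_eq_half_integral pcompose_x_pow_one_plus_x_pow) (simp add: w_def)
  also have "\<dots> = (-1) ^ k / ((2 * of_nat k + 1) * of_nat ((2 * k) choose k)) / 2"
    using assms by (simp add: P_def umbral_integral_moment_x_pow_one_plus_x_pow zero_power)
  also have "\<dots> = (-1) ^ k / (2 * (2 * of_nat k + 1) * of_nat ((2 * k) choose k))"
    by (simp add: algebra_simps)
  finally show ?thesis .
qed

end
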